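(* In the setting of the context, let $\varepsilon\in(0,1)$, $\delta\in(0,1/2)$, and assume that $|u_N(x,y)|<\delta$ for some $x\in[-3N,3N]\setminus X_0$ and some $y$ with $1-|y|<\varepsilon$. Then $H_x(u_N(x,\cdot))\ge\frac{(f_N(x)-\delta)^2}{\varepsilon}$. In particular, if $x\in[-3N,3N]\setminus X_0$ and there exists $y$ with $1-|y|<\frac{1}{44}$ and $|u_N(x,y)|<\frac14$, then $H_x(u_N(x,\cdot))\ge H_x(v_N(x,\cdot))+1$.
   Context: Fix a small universal constant $\alpha\in(0,1)$ (e.g. $\alpha=1/10$). For $N>0$ let $\overline{R}_N=[-3N,3N]\times[-1,1]$ with coordinates $(x,y)$, and $f_N(x)=1-\alpha$ if $|x|\le N$, $f_N(x)=\frac{|x|(1+\alpha)}{N}-2\alpha$ if $N\le|x|\le2N$, $f_N(x)=2$ if $2N\le|x|\le3N$. Let $J(w)=\iint_{\overline{R}_N}|\nabla w|^2+|\{w\neq0\}|$ and let $u_N$ be any minimizer of $J$ among $w\in W^{1,2}(\overline{R}_N)$ with $w(x,\pm1)=\pm f_N(x)$ (no condition on vertical sides). For $x\in[-3N,3N]$, $H_x(w)=\int_{-1}^1(w')^2dy+|\{w\ne0\}\cap[-1,1]|$ for $w\in W^{1,2}([-1,1])$; $v_N(x,\cdot)$ is the unique minimizer of $H_x$ with $w(\pm1)=\pm f_N(x)$. $X_0\subset[-3N,3N]$ is the smallest set such that for $x\notin X_0$, $u_N(x,\cdot)\in W^{1,2}([-1,1])$ and $\lim_{y\to\pm1}u_N(x,y)=\pm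 f_N(x)$ (it has measure zero). *)

theory Defs
  imports "HOL-Analysis.Analysis"
begin

definition fN :: "real \<Rightarrow> real \<Rightarrow> real \<Rightarrow> real" where
  "fN \<alpha> N x =
     (if \<bar>x\<bar> \<le> N then 1 - \<alpha>
      else if \<bar>x\<bar> \<le> 2 * N then \<bar>x\<bar> * (1 + \<alpha>) / N - 2 * \<alpha>
      else 2)"

definition rectN :: "real \<Rightarrow> (real \<times> real) set" where
  "rectN N = {-3 * N .. 3 * N} \<times> {-1 .. 1}"

definition test_fun :: "(real \<times> real) set \<Rightarrow> (real \<times> real \<Rightarrow> real) \<Rightarrow> (real \<times> real \<Rightarrow> real \<times> real) \<Rightarrow> bool" where
  "test_fun R \<phi> \<phi>' \<longleftrightarrow>
     (\<exists>K. compact K \<and> K \<subseteq> interior R \<and> (\<forall>z. z \<notin> K \<longrightarrow> \<phi> z = 0)) \<and>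
     (\<forall>z. (\<phi> has_derivative (\<lambda>h. \<phi>' z \<bullet> h)) (at z)) \<and> continuous_on UNIV \<phi>'"

definition L2_on :: "(real \<times> real) set \<Rightarrow> (real \<times> real \<Rightarrow> real) \<Rightarrow> bool" where
  "L2_on R g \<longleftrightarrow> set_borel_measurable lebesgue R g \<and> set_integrable lebesgue R (\<lambda>z. (g z)\<^sup>2)"

definition weak_grad :: "(real \<times> real) set \<Rightarrow> (real \<times> real \<Rightarrow> real) \<Rightarrow> (real \<times> real \<Rightarrow> real) \<Rightarrow> (real \<times> real \<Rightarrow> real) \<Rightarrow> bool" where
  "weak_grad R w g1 g2 \<longleftrightarrow>
     (\<forall>\<phi> \<phi>'. test_fun R \<phi> \<phi>' \<longrightarrow>
        set_lebesgue_integral lebesgue R (\<lambda>z. w z * fst (\<phi>' z)) = - set_lebesgue_integral lebesgue R (\<lambda>z. g1 z * \<phi> z) \<and>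
        set_lebesgue_integral lebesgue R (\<lambda>z. w z * snd (\<phi>' z)) = - set_lebesgue_integral lebesgue R (\<lambda>z. g2 z * \<phi> z))"

definition W12_2D :: "(real \<times> real) set \<Rightarrow> (real \<times> real \<Rightarrow> real) \<Rightarrow> bool" where
  "W12_2D R w \<longleftrightarrow> L2_on R w \<and> (\<exists>g1 g2. L2_on R g1 \<and> L2_on R g2 \<and> weak_grad R w g1 g2)"

(* Dirichlet energy \<integral>_R |\<nabla>w|^2 (the weak gradient is unique a.e.) *)
definition dirichlet :: "(real \<times> real) set \<Rightarrow> (real \<times> real \<Rightarrow> real) \<Rightarrow> real" where
  "dirichlet R w = (SOME d. \<exists>g1 g2. L2_on R g1 \<and> L2_on R g2 \<and> weak_grad R w g1 g2 \<and>
       d = set_lebesgue_integral lebesgue R (\<lambda>z. (g1 z)\<^sup>2 + (g2 z)\<^sup>2))"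

definition JN :: "real \<Rightarrow> (real \<times> real \<Rightarrow> real) \<Rightarrow> real" where
  "JN N w = dirichlet (rectN N) w + measure lebesgue {z \<in> rectN N. w z \<noteq> 0}"

(* boundary condition w(x,\<plusminus>1) = \<plusminus>f_N(x) in the trace sense: some representative of w
   (equal to w a.e. on R) has, for a.e. x, vertical limits \<plusminus>f_N(x) at y = \<plusminus>1 *)
definition bc_N :: "real \<Rightarrow> real \<Rightarrow> (real \<times> real \<Rightarrow> real) \<Rightarrow> bool" where
  "bc_N \<alpha> N w \<longleftrightarrow> (\<exists>w'. (AE z in lebesgue. z \<in> rectN N \<longrightarrow> w' z = w z) \<and>
      (AE x in lebesgue. x \<in> {-3 * N .. 3 * N} \<longrightarrow>
         ((\<lambda>y. w' (x, y)) \<longlongrightarrow> fN \<alpha> N x) (at_left 1) \<and>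
         ((\<lambda>y. w' (x, y)) \<longlongrightarrow> - fN \<alpha> N x) (at_right (-1))))"

definition is_minimizer_J :: "real \<Rightarrow> real \<Rightarrow> (real \<times> real \<Rightarrow> real) \<Rightarrow> bool" where
  "is_minimizer_J \<alpha> N u \<longleftrightarrow> W12_2D (rectN N) u \<and> bc_N \<alpha> N u \<and>
     (\<forall>w. W12_2D (rectN N) w \<and> bc_N \<alpha> N w \<longrightarrow> JN N u \<le> JN N w)"

definition W12_deriv :: "(real \<Rightarrow> real) \<Rightarrow> (real \<Rightarrow> real) \<Rightarrow> bool" where
  "W12_deriv w g \<longleftrightarrow> g \<in> borel_measurable lborel \<and>
     set_integrable lborel {-1..1} g \<and> set_integrable lborel {-1..1} (\<lambda>y. (g y)\<^sup>2) \<and>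
     (\<forall>y \<in> {-1<..<1}. w y = w 0 + interval_lebesgue_integral lborel 0 y g)"

definition W12_1D :: "(real \<Rightarrow> real) \<Rightarrow> bool" where
  "W12_1D w \<longleftrightarrow> (\<exists>g. W12_deriv w g)"

definition Hfun :: "(real \<Rightarrow> real) \<Rightarrow> real" where
  "Hfun w = (SOME h. \<exists>g. W12_deriv w g \<and>
      h = set_lebesgue_integral lborel {-1..1} (\<lambda>y. (g y)\<^sup>2) + measure lborel {y \<in> {-1..1}. w y \<noteq> 0})"

definition admissible_H :: "real \<Rightarrow> real \<Rightarrow> real \<Rightarrow> (real \<Rightarrow> real) \<Rightarrow> bool" where
  "admissible_H \<alpha> N x w \<longleftrightarrow> W12_1D w \<and>
     (w \<longlongrightarrow> fN \<alpha> N x) (at_left 1) \<and> (w \<longlongrightarrow> - fN \<alpha> N x) (at_right (-1))"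

definition is_minimizer_H :: "real \<Rightarrow> real \<Rightarrow> real \<Rightarrow> (real \<Rightarrow> real) \<Rightarrow> bool" where
  "is_minimizer_H \<alpha> N x v \<longleftrightarrow> admissible_H \<alpha> N x v \<and>
     (\<forall>w. admissible_H \<alpha> N x w \<longrightarrow> Hfun v \<le> Hfun w)"

definition X0 :: "real \<Rightarrow> real \<Rightarrow> (real \<times> real \<Rightarrow> real) \<Rightarrow> real set" where
  "X0 \<alpha> N u = {x \<in> {-3 * N .. 3 * N}. \<not> admissible_H \<alpha> N x (\<lambda>y. u (x, y))}"

end

theory Submission
  imports Defs
begin

(* A slice w = u(x,-) is absolutely continuous on [-1,1] with boundary values -f and f,
   where f = f_N(x). If |w(y)| < delta and y lies within 1 - |y| < eps of the nearer endpoint,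
   then w changes by at least f - delta on an interval of length less than eps, and
   Cauchy-Schwarz on that interval gives int (w')^2 >= (f - delta)^2 / eps.
   For the second claim take eps = 1/44 and delta = 1/4: as f >= 1 - alpha >= 9/10, the bound
   44 (f - 1/4)^2 exceeds by at least 1 the value 2 f^2 + 2, which bounds H_x of the linear
   competitor y |-> f y and hence the minimum H_x(v_N(x,-)). *)

lemma W12_deriv_integrable:
  assumes "W12_deriv w g"
  shows "g integrable_on {-1..1}" "(\<lambda>y. (g y)\<^sup>2) integrable_on {-1..1}"
    and "(LBINT y:{-1..1}. (g y)\<^sup>2) = integral {-1..1} (\<lambda>y. (g y)\<^sup>2)"
  using assms set_borel_integral_eq_integral unfolding W12_deriv_def by auto

lemma W12_deriv_eq_integral:
  assumes d: "W12_deriv w g" and t: "t \<in> {-1<..<1}"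
  shows "w t = w 0 - integral {-1..0} g + integral {-1..t} g"
proof -
  have g: "set_integrable lborel {-1..1} g"
    using d unfolding W12_deriv_def by auto
  have LBINT_eq_integral: "(LBINT y=-1..s. g y) = integral {-1..s} g" if "s \<in> {-1..1}" for s
  proof -
    have "set_integrable lborel {-1..s} g"
      by (rule set_integrable_subset[OF g]) (use that in auto)
    then show ?thesis
      using that interval_integral_Icc[of "-1" s g]
      by (simp add: set_borel_integral_eq_integral(2) one_ereal_def)
  qed
  have "min (-1) (min 0 (ereal t)) = -1" "max (-1) (max 0 (ereal t)) = ereal (max 0 t)"
    using t by (auto simp: min_def max_def one_ereal_def)
  moreover have "set_integrable lborel (einterval (-1) (ereal (max 0 t))) g"
    by (rule set_integrable_subset[OF g])
      (use t in \<open>auto simp: einterval_def one_ereal_def max_def split: if_splits\<close>)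
  ultimately have "(LBINT y=-1..0. g y) + (LBINT y=0..t. g y) = (LBINT y=-1..t. g y)"
    using t by (intro interval_integral_sum)
      (auto simp: interval_lebesgue_integrable_def one_ereal_def max_def)
  moreover have "w t = w 0 + (LBINT y=0..t. g y)"
    using d t unfolding W12_deriv_def by blast
  ultimately show ?thesis
    using LBINT_eq_integral[of 0] LBINT_eq_integral[of t] t by (simp add: zero_ereal_def)
qed

lemma W12_deriv_tendsto:
  assumes d: "W12_deriv w g"
  shows "(w \<longlongrightarrow> w 0 - integral {-1..0} g + integral {-1..1} g) (at_left 1)"
    and "(w \<longlongrightarrow> w 0 - integral {-1..0} g) (at_right (-1))"
proof -
  define W where "W x = w 0 - integral {-1..0} g + integral {-1..x} g" for x
  have W: "continuous_on {-1..1} W"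
    unfolding W_def
    by (intro continuous_on_add continuous_on_const indefinite_integral_continuous_1
        W12_deriv_integrable(1)[OF d])
  have "\<forall>\<^sub>F x in at_left (1::real). x \<in> {-1<..<1}"
    by (rule eventually_at_left_real) simp
  then have left: "\<forall>\<^sub>F x in at_left 1. W x = w x"
    by eventually_elim (metis W_def W12_deriv_eq_integral[OF d])
  have "\<forall>\<^sub>F x in at_right (-1::real). x \<in> {-1<..<1}"
    by (rule eventually_at_right_real) simp
  then have right: "\<forall>\<^sub>F x in at_right (-1). W x = w x"
    by eventually_elim (metis W_def W12_deriv_eq_integral[OF d])
  have "(w \<longlongrightarrow> W 1) (at_left 1)" "(w \<longlongrightarrow> W (-1)) (at_right (-1))"
    using Lim_transform_eventually[OF continuous_on_Icc_at_leftD[OF W] left]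
      Lim_transform_eventually[OF continuous_on_Icc_at_rightD[OF W] right] by simp_all
  then show "(w \<longlongrightarrow> w 0 - integral {-1..0} g + integral {-1..1} g) (at_left 1)"
    and "(w \<longlongrightarrow> w 0 - integral {-1..0} g) (at_right (-1))"
    by (simp_all add: W_def)
qed

lemma square_integral_div_le_integral_square:
  fixes g :: "real \<Rightarrow> real"
  assumes g: "g integrable_on {a..b}" and g2: "(\<lambda>t. (g t)\<^sup>2) integrable_on {a..b}" and ab: "a < b"
  shows "(integral {a..b} g)\<^sup>2 / (b - a) \<le> integral {a..b} (\<lambda>t. (g t)\<^sup>2)"
proof -
  define k where "k = integral {a..b} g / (b - a)"
  have "((\<lambda>t. (g t)\<^sup>2 - 2 * k * g t + k\<^sup>2) has_integral
         integral {a..b} (\<lambda>t. (g t)\<^sup>2) - 2 * k * integral {a..b} g + (b - a) * k\<^sup>2) {a..b}"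
    using has_integral_const_real[of "k\<^sup>2" a b] ab
    by (intro has_integral_add has_integral_diff has_integral_mult_right integrable_integral g g2) simp
  then have "0 \<le> integral {a..b} (\<lambda>t. (g t)\<^sup>2) - 2 * k * integral {a..b} g + (b - a) * k\<^sup>2"
  proof (rule has_integral_nonneg)
    show "0 \<le> (g t)\<^sup>2 - 2 * k * g t + k\<^sup>2" for t
      using zero_le_power2[of "g t - k"] by (simp add: power2_diff algebra_simps)
  qed
  moreover have "2 * k * integral {a..b} g - (b - a) * k\<^sup>2 = (integral {a..b} g)\<^sup>2 / (b - a)"
  proof -
    have "b - a \<noteq> 0"
      using ab by simp
    then show ?thesis
      unfolding k_def by (simp add: power2_eq_square divide_simps)
  qed
  ultimately show ?thesis
    by linarith
qed

lemma AE_zero_if_integral_greaterThan_zero: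
  fixes h :: "real \<Rightarrow> real"
  assumes h: "integrable lborel h" and tails: "\<And>x. (LBINT t:{x<..}. h t) = 0"
  shows "AE t in lborel. h t = 0"
proof -
  have tail_density:
    "emeasure (density lborel (\<lambda>t. ennreal (f t))) {x<..} = ennreal (LBINT t:{x<..}. f t)"
    if f: "integrable lborel f" and "\<And>t. 0 \<le> f t" for f :: "real \<Rightarrow> real" and x
  proof -
    have "emeasure (density lborel (\<lambda>t. ennreal (f t))) {x<..} =
        (\<integral>\<^sup>+ t. ennreal (indicator {x<..} t * f t) \<partial>lborel)"
      using f by (subst emeasure_density) (auto intro!: nn_integral_cong simp: indicator_def)
    also have "\<dots> = ennreal (LBINT t:{x<..}. f t)"
      using f that(2) integrable_mult_indicator[of "{x<..}" lborel f]
      unfolding set_lebesgue_integral_def by (subst nn_integral_eq_integral) auto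
    finally show ?thesis .
  qed
  (* The positive and negative parts of h are densities of finite measures that agree on all
     rays {x<..}, so they coincide. *)
  define p n where "p t = max 0 (h t)" and "n t = max 0 (- h t)" for t
  have p: "integrable lborel p" and n: "integrable lborel n"
    unfolding p_def n_def using h by auto
  have p_nonneg: "0 \<le> p t" and n_nonneg: "0 \<le> n t" for t
    by (simp_all add: p_def n_def)
  have "(LBINT t:{x<..}. p t) = (LBINT t:{x<..}. n t)" for x
  proof -
    have "h t = p t - n t" for t
      by (simp add: p_def n_def)
    then have "(LBINT t:{x<..}. h t) = (LBINT t:{x<..}. p t - n t)"
      by simp
    also have "\<dots> = (LBINT t:{x<..}. p t) - (LBINT t:{x<..}. n t)"
      using integrable_mult_indicator[OF _ p, of "{x<..}"]
        integrable_mult_indicator[OF _ n, of "{x<..}"]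
      by (intro set_integral_diff) (simp_all add: set_integrable_def)
    finally have "(LBINT t:{x<..}. h t) = (LBINT t:{x<..}. p t) - (LBINT t:{x<..}. n t)" .
    then show ?thesis
      using tails[of x] by simp
  qed
  then have "density lborel (\<lambda>t. ennreal (p t)) = density lborel (\<lambda>t. ennreal (n t))"
    by (intro measure_eqI_lessThan) (simp_all add: tail_density p n p_nonneg n_nonneg)
  moreover have "(\<integral>\<^sup>+ t. ennreal (p t) \<partial>lborel) \<noteq> \<infinity>"
    using p p_nonneg by (subst nn_integral_eq_integral) auto
  ultimately have "AE t in lborel. ennreal (p t) = ennreal (n t)"
    using finite_density_unique[of "\<lambda>t. ennreal (p t)" lborel "\<lambda>t. ennreal (n t)"] p n by auto
  then show ?thesis
    by eventually_elim (auto simp: p_def n_def)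
qed

lemma AE_zero_if_integrals_atLeastAtMost_zero:
  fixes h :: "real \<Rightarrow> real"
  assumes h: "set_integrable lborel {a..b} h"
    and zero: "\<And>t. t \<in> {a..b} \<Longrightarrow> integral {a..t} h = 0"
  shows "AE t in lborel. t \<in> {a..b} \<longrightarrow> h t = 0"
proof -
  have h_int: "h integrable_on {a..b}"
    using h by (rule set_borel_integral_eq_integral(1))
  have final_segment: "(LBINT t:{s..b}. h t) = 0" if s: "s \<in> {a..b}" for s
  proof -
    have "set_integrable lborel {s..b} h"
      by (rule set_integrable_subset[OF h]) (use s in auto)
    then have "(LBINT t:{s..b}. h t) = integral {s..b} h"
      by (simp add: set_borel_integral_eq_integral)
    also have "\<dots> = integral {a..b} h - integral {a..s} h"
      using Henstock_Kurzweil_Integration.integral_combine[of a s b h] s h_int by simp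
    finally show ?thesis
      using zero[of s] zero[of b] s by simp
  qed
  define H where "H = (\<lambda>t. indicator {a..b} t * h t)"
  have "integrable lborel H"
    using h by (simp add: H_def set_integrable_def)
  moreover have "(LBINT t:{x<..}. H t) = 0" for x
  proof -
    have "(LBINT t:{x<..}. H t) = (LBINT t:{x<..} \<inter> {a..b}. h t)"
      by (simp add: H_def set_lebesgue_integral_def indicator_inter_arith mult_ac)
    also have "\<dots> = 0"
    proof (cases "x < a")
      case True
      then have "{x<..} \<inter> {a..b} = {a..b}"
        by auto
      then show ?thesis
        using final_segment[of a] by (cases "a \<le> b") (simp_all add: set_lebesgue_integral_def)
    next
      case False
      then have "{x<..} \<inter> {a..b} = {x<..b}"
        by auto
      moreover have "(LBINT t:{x<..b}. h t) = (LBINT t:{x..b}. h t)" if "x \<le> b"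
        using interval_integral_Ioc[of x b h] interval_integral_Icc[of x b h] that by simp
      ultimately show ?thesis
        using False final_segment[of x]
        by (cases "x \<le> b") (simp_all add: set_lebesgue_integral_def)
    qed
    finally show ?thesis .
  qed
  ultimately have "AE t in lborel. H t = 0"
    by (rule AE_zero_if_integral_greaterThan_zero)
  then show ?thesis
    by eventually_elim (auto simp: H_def)
qed

lemma W12_deriv_unique:
  assumes g: "W12_deriv w g" and g': "W12_deriv w g'"
  shows "AE t in lborel. t \<in> {-1..1} \<longrightarrow> g t = g' t"
proof -
  have same_start: "integral {-1..0} g = integral {-1..0} g'"
    using tendsto_unique[OF _ W12_deriv_tendsto(2)[OF g] W12_deriv_tendsto(2)[OF g']] by simp
  have same_end: "integral {-1..1} g = integral {-1..1} g'"
    using tendsto_unique[OF _ W12_deriv_tendsto(1)[OF g] W12_deriv_tendsto(1)[OF g']] same_start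
    by simp
  have int: "g integrable_on {-1..t}" "g' integrable_on {-1..t}" if "t \<in> {-1..1}" for t
    using that W12_deriv_integrable(1)[OF g] W12_deriv_integrable(1)[OF g']
    by (auto intro: integrable_on_subinterval)
  have "integral {-1..t} (\<lambda>s. g s - g' s) = 0" if t: "t \<in> {-1..1}" for t
  proof -
    have "integral {-1..t} g = integral {-1..t} g'"
    proof -
      consider "t = -1" | "t = 1" | "t \<in> {-1<..<1}"
        using t by fastforce
      then show ?thesis
      proof cases
        case 3
        then show ?thesis
          using W12_deriv_eq_integral[OF g 3] W12_deriv_eq_integral[OF g' 3] same_start
          by linarith
      qed (use same_end in simp_all)
    qed
    then show ?thesis
      using int[OF t] by (simp add: integral_diff)
  qed
  moreover have "set_integrable lborel {-1..1} (\<lambda>s. g s - g' s)"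
    using g g' unfolding W12_deriv_def by (intro set_integral_diff(1)) blast+
  ultimately have "AE t in lborel. t \<in> {-1..1} \<longrightarrow> g t - g' t = 0"
    by (intro AE_zero_if_integrals_atLeastAtMost_zero) auto
  then show ?thesis
    by eventually_elim simp
qed

lemma Hfun_eq:
  assumes g: "W12_deriv w g"
  shows "Hfun w = (LBINT y:{-1..1}. (g y)\<^sup>2) + measure lborel {y \<in> {-1..1}. w y \<noteq> 0}"
proof -
  (* Hfun is defined through an arbitrarily chosen derivative; by W12_deriv_unique the choice
     does not matter. *)
  have "\<exists>g'. W12_deriv w g' \<and>
      Hfun w = (LBINT y:{-1..1}. (g' y)\<^sup>2) + measure lborel {y \<in> {-1..1}. w y \<noteq> 0}"
    unfolding Hfun_def by (rule someI_ex) (use g in blast)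
  then obtain g' where g': "W12_deriv w g'"
    and H: "Hfun w = (LBINT y:{-1..1}. (g' y)\<^sup>2) + measure lborel {y \<in> {-1..1}. w y \<noteq> 0}"
    by blast
  have measurable: "g \<in> borel_measurable lborel" "g' \<in> borel_measurable lborel"
    using g g' unfolding W12_deriv_def by blast+
  have "(LBINT y:{-1..1}. (g' y)\<^sup>2) = (LBINT y:{-1..1}. (g y)\<^sup>2)"
  proof (rule set_lebesgue_integral_cong_AE)
    show "AE y\<in>{-1..1} in lborel. (g' y)\<^sup>2 = (g y)\<^sup>2"
      using W12_deriv_unique[OF g' g] by eventually_elim simp
  qed (use measurable in auto)
  with H show ?thesis
    by simp
qed

lemma W12_deriv_linear: "W12_deriv (\<lambda>t. c * t) (\<lambda>_. c)"
proof -
  have "set_integrable lborel {-1..1::real} (\<lambda>_. d)" for d :: real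
    by (intro borel_integrable_atLeastAtMost' continuous_on_const)
  moreover have "c * y = c * 0 + (LBINT t=0..y. c)" for y
    using interval_integral_const(2)[of 0 y c] by (simp add: zero_ereal_def)
  ultimately show ?thesis
    unfolding W12_deriv_def by auto
qed

lemma Hfun_linear_le: "Hfun (\<lambda>t. c * t) \<le> 2 * c\<^sup>2 + 2"
proof -
  have "measure lborel {y \<in> {-1..1::real}. c * y \<noteq> 0} \<le> measure lborel {-1..1::real}"
    by (intro measure_mono_fmeasurable) (auto simp: fmeasurable_def)
  moreover have "(LBINT y:{-1..1::real}. c\<^sup>2) = 2 * c\<^sup>2"
    by (subst set_integral_const) auto
  ultimately show ?thesis
    using Hfun_eq[OF W12_deriv_linear, of c] by simp
qed

lemma W12_deriv_integral_square_ge: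
  assumes d: "W12_deriv w g"
    and left: "(w \<longlongrightarrow> f) (at_left 1)" and right: "(w \<longlongrightarrow> - f) (at_right (-1))"
    and y: "y \<in> {-1<..<1}" and "1 - \<bar>y\<bar> < \<epsilon>" and "\<bar>w y\<bar> < \<delta>" and "\<delta> < f"
  shows "(f - \<delta>)\<^sup>2 / \<epsilon> \<le> integral {-1..1} (\<lambda>t. (g t)\<^sup>2)"
proof -
  have g: "g integrable_on {-1..1}" and g2: "(\<lambda>t. (g t)\<^sup>2) integrable_on {-1..1}"
    using W12_deriv_integrable[OF d] by auto
  have f: "f = w 0 - integral {-1..0} g + integral {-1..1} g"
    using tendsto_unique[OF _ left W12_deriv_tendsto(1)[OF d]] by simp
  have minus_f: "- f = w 0 - integral {-1..0} g"
    using tendsto_unique[OF _ right W12_deriv_tendsto(2)[OF d]] by simp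
  have wy: "w y = w 0 - integral {-1..0} g + integral {-1..y} g"
    by (rule W12_deriv_eq_integral[OF d y])
  obtain a b where ab: "-1 \<le> a" "a < b" "b \<le> 1" and len: "b - a = 1 - \<bar>y\<bar>"
    and jump: "f - \<bar>w y\<bar> \<le> integral {a..b} g"
  proof (cases "0 \<le> y")
    case True
    have "integral {-1..y} g + integral {y..1} g = integral {-1..1} g"
      using y g by (intro Henstock_Kurzweil_Integration.integral_combine) auto
    then have "integral {y..1} g = f - w y"
      using f wy by linarith
    then show ?thesis
      using that[of y 1] y True abs_ge_self[of "w y"] by simp
  next
    case False
    have "integral {-1..y} g = f + w y"
      using minus_f wy by linarith
    then show ?thesis
      using that[of "-1" y] y False abs_ge_minus_self[of "w y"] by simp
  qed
  have ga: "g integrable_on {a..b}" and g2a: "(\<lambda>t. (g t)\<^sup>2) integrable_on {a..b}"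
    using ab by (auto intro: integrable_on_subinterval[OF g] integrable_on_subinterval[OF g2])
  have "(f - \<delta>)\<^sup>2 / \<epsilon> \<le> (f - \<delta>)\<^sup>2 / (b - a)"
    using assms(5) len ab by (intro divide_left_mono) auto
  also have "\<dots> \<le> (integral {a..b} g)\<^sup>2 / (b - a)"
    using ab jump assms(6,7) by (intro divide_right_mono power_mono) auto
  also have "\<dots> \<le> integral {a..b} (\<lambda>t. (g t)\<^sup>2)"
    by (rule square_integral_div_le_integral_square[OF ga g2a ab(2)])
  also have "\<dots> \<le> integral {-1..1} (\<lambda>t. (g t)\<^sup>2)"
    using ab by (intro integral_subset_le g2a g2) auto
  finally show ?thesis .
qed

lemma Hfun_ge_boundary_layer:
  assumes "W12_1D w" and "(w \<longlongrightarrow> f) (at_left 1)" and "(w \<longlongrightarrow> - f) (at_right (-1))"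
    and "y \<in> {-1<..<1}" and "1 - \<bar>y\<bar> < \<epsilon>" and "\<bar>w y\<bar> < \<delta>" and "\<delta> < f"
  shows "(f - \<delta>)\<^sup>2 / \<epsilon> \<le> Hfun w"
proof -
  obtain g where g: "W12_deriv w g"
    using assms(1) unfolding W12_1D_def by blast
  have "(f - \<delta>)\<^sup>2 / \<epsilon> \<le> (LBINT t:{-1..1}. (g t)\<^sup>2)"
    using W12_deriv_integral_square_ge[OF g assms(2-)] W12_deriv_integrable(3)[OF g] by simp
  then show ?thesis
    using Hfun_eq[OF g] measure_nonneg[of lborel "{y \<in> {-1..1}. w y \<noteq> 0}"] by linarith
qed

lemma fN_ge_one_minus:
  assumes "-1 \<le> \<alpha>" and "0 < N"
  shows "1 - \<alpha> \<le> fN \<alpha> N x"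
proof -
  have "1 - \<alpha> \<le> \<bar>x\<bar> * (1 + \<alpha>) / N - 2 * \<alpha>" if "N < \<bar>x\<bar>"
  proof -
    have "1 * (1 + \<alpha>) \<le> \<bar>x\<bar> / N * (1 + \<alpha>)"
      using that assms by (intro mult_right_mono) auto
    then show ?thesis
      by simp
  qed
  then show ?thesis
    using assms unfolding fN_def by auto
qed

lemma admissible_H_linear: "admissible_H \<alpha> N x (\<lambda>t. fN \<alpha> N x * t)"
  unfolding admissible_H_def W12_1D_def
  using W12_deriv_linear tendsto_mult_left[OF tendsto_ident_at, of "fN \<alpha> N x" 1 "{..<1}"]
    tendsto_mult_left[OF tendsto_ident_at, of "fN \<alpha> N x" "-1" "{-1<..}"]
  by auto

lemma Hfun_ge_minimizer_plus_one:
  assumes w: "admissible_H \<alpha> N x w" and v: "is_minimizer_H \<alpha> N x v"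
    and f: "9/10 \<le> fN \<alpha> N x"
    and "y \<in> {-1<..<1}" and "1 - \<bar>y\<bar> < 1/44" and "\<bar>w y\<bar> < 1/4"
  shows "Hfun v + 1 \<le> Hfun w"
proof -
  define c where "c = fN \<alpha> N x"
  have c: "9/10 \<le> c"
    using f by (simp add: c_def)
  have "Hfun v \<le> Hfun (\<lambda>t. c * t)"
    using v admissible_H_linear unfolding is_minimizer_H_def c_def by blast
  also have "\<dots> \<le> 2 * c\<^sup>2 + 2"
    by (rule Hfun_linear_le)
  also have "\<dots> \<le> 44 * (c - 1/4)\<^sup>2 - 1"
  proof -
    have "9/10 * c \<le> c * c"
      using mult_right_mono[OF c, of c] c by simp
    moreover have "44 * (c - 1/4)\<^sup>2 - 1 - (2 * c\<^sup>2 + 2) = 42 * (c * c) - 22 * c - 1/4"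
      by (simp add: power2_eq_square algebra_simps)
    ultimately show ?thesis
      using c by linarith
  qed
  also have "44 * (c - 1/4)\<^sup>2 = (c - 1/4)\<^sup>2 / (1/44)"
    by simp
  also have "\<dots> \<le> Hfun w"
    using w f assms(4-) unfolding admissible_H_def c_def by (intro Hfun_ge_boundary_layer) auto
  finally show ?thesis
    by simp
qed

theorem lemma3p3:
  fixes \<alpha> N :: real and u :: "real \<times> real \<Rightarrow> real"
  assumes "0 < \<alpha>" and "\<alpha> \<le> 1/10" and "0 < N"
    and "is_minimizer_J \<alpha> N u"
  shows "(\<forall>\<epsilon> \<delta> x y. 0 < \<epsilon> \<and> \<epsilon> < 1 \<and> 0 < \<delta> \<and> \<delta> < 1/2 \<and>
            x \<in> {-3 * N .. 3 * N} - X0 \<alpha> N u \<and> y \<in> {-1<..<1} \<and> 1 - \<bar>y\<bar> < \<epsilon> \<and>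
            \<bar>u (x, y)\<bar> < \<delta> \<longrightarrow>
            Hfun (\<lambda>t. u (x, t)) \<ge> (fN \<alpha> N x - \<delta>)\<^sup>2 / \<epsilon>)
       \<and> (\<forall>x y v. x \<in> {-3 * N .. 3 * N} - X0 \<alpha> N u \<and> y \<in> {-1<..<1} \<and> 1 - \<bar>y\<bar> < 1/44 \<and>
            \<bar>u (x, y)\<bar> < 1/4 \<and> is_minimizer_H \<alpha> N x v \<longrightarrow>
            Hfun (\<lambda>t. u (x, t)) \<ge> Hfun v + 1)"
proof -
  have f: "9/10 \<le> fN \<alpha> N x" for x
    using fN_ge_one_minus[of \<alpha> N x] assms(1-3) by linarith
  have slice: "admissible_H \<alpha> N x (\<lambda>t. u (x, t))"
    if "x \<in> {-3 * N .. 3 * N} - X0 \<alpha> N u" for x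
    using that unfolding X0_def by blast
  show ?thesis
  proof (intro conjI allI impI; elim conjE)
    fix \<epsilon> \<delta> x y
    assume "\<delta> < 1/2" "x \<in> {-3 * N .. 3 * N} - X0 \<alpha> N u" "y \<in> {-1<..<1}" "1 - \<bar>y\<bar> < \<epsilon>"
      "\<bar>u (x, y)\<bar> < \<delta>"
    then show "(fN \<alpha> N x - \<delta>)\<^sup>2 / \<epsilon> \<le> Hfun (\<lambda>t. u (x, t))"
      using slice f[of x] unfolding admissible_H_def by (intro Hfun_ge_boundary_layer) auto
  next
    fix x y v
    assume "x \<in> {-3 * N .. 3 * N} - X0 \<alpha> N u" "y \<in> {-1<..<1}" "1 - \<bar>y\<bar> < 1/44"
      "\<bar>u (x, y)\<bar> < 1/4" "is_minimizer_H \<alpha> N x v"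
    then show "Hfun v + 1 \<le> Hfun (\<lambda>t. u (x, t))"
      using slice f by (intro Hfun_ge_minimizer_plus_one) auto
  qed
qed

end
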